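(* Let $m,n\ge 0$ be integers. Every clique $C$ in ${\rm SR}(m,n)$ is of one of the following three types: 1. All pairs of distinct vertices of $C$ differ exactly in coordinates $j$ and $k$, for a fixed pair $j\ne k$; then $|C|\le n+1$. 2. $C=\{x+ae_i : i\in I\}$, where $a$ is an integer with $1\le a\le n$, $x\in\mathbb{N}^m$ has coordinate sum $n-a$, and $I\subseteq\{1,\dots,m\}$; then $|C|\le m$. 3. $C=\{x-ae_i : i\in I\}$, where $a$ is an integer with $a\ge 1$, $x\in\mathbb{N}^m$ has coordinate sum $n+a$, $I\subseteq\{1,\dots,m\}$, and $x_i\ge a$ for all $i\in I$; then $|C|\le m$.
   Context: $\mathbb{N}=\{0,1,2,\dots\}$. ${\rm SR}(m,n)$ is the graph whose vertices are the vectors in $\mathbb{N}^m$ with coordinate sum $n$, two vertices being adjacent when they differ in precisely two coordinate positions. $e_i$ is the $i$-th standard unit vector. A clique is a set of pairwise adjacent vertices. *)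

theory Defs
  imports Main
begin

text \<open>Vectors in N^m are represented as functions nat => nat vanishing outside
  the coordinate positions {0..<m} (coordinates are 0-indexed).\<close>

definition in_Nm :: "nat \<Rightarrow> (nat \<Rightarrow> nat) \<Rightarrow> bool" where
  "in_Nm m x \<longleftrightarrow> (\<forall>i\<ge>m. x i = 0)"

definition coord_sum :: "nat \<Rightarrow> (nat \<Rightarrow> nat) \<Rightarrow> nat" where
  "coord_sum m x = (\<Sum>i<m. x i)"

definition SR_verts :: "nat \<Rightarrow> nat \<Rightarrow> (nat \<Rightarrow> nat) set" where
  "SR_verts m n = {x. in_Nm m x \<and> coord_sum m x = n}"

definition diff_coords :: "nat \<Rightarrow> (nat \<Rightarrow> nat) \<Rightarrow> (nat \<Rightarrow> nat) \<Rightarrow> nat set" where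
  "diff_coords m x y = {i. i < m \<and> x i \<noteq> y i}"

definition SR_adj :: "nat \<Rightarrow> nat \<Rightarrow> (nat \<Rightarrow> nat) \<Rightarrow> (nat \<Rightarrow> nat) \<Rightarrow> bool" where
  "SR_adj m n x y \<longleftrightarrow> x \<in> SR_verts m n \<and> y \<in> SR_verts m n \<and> card (diff_coords m x y) = 2"

definition SR_clique :: "nat \<Rightarrow> nat \<Rightarrow> (nat \<Rightarrow> nat) set \<Rightarrow> bool" where
  "SR_clique m n C \<longleftrightarrow> C \<subseteq> SR_verts m n \<and> (\<forall>x\<in>C. \<forall>y\<in>C. x \<noteq> y \<longrightarrow> SR_adj m n x y)"

definition unit_vec :: "nat \<Rightarrow> nat \<Rightarrow> nat" where
  "unit_vec i = (\<lambda>j. if j = i then 1 else 0)"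

definition vplus :: "(nat \<Rightarrow> nat) \<Rightarrow> nat \<Rightarrow> (nat \<Rightarrow> nat) \<Rightarrow> (nat \<Rightarrow> nat)" where
  "vplus x a v = (\<lambda>j. x j + a * v j)"

definition vminus :: "(nat \<Rightarrow> nat) \<Rightarrow> nat \<Rightarrow> (nat \<Rightarrow> nat) \<Rightarrow> (nat \<Rightarrow> nat)" where
  "vminus x a v = (\<lambda>j. x j - a * v j)"

end

theory Submission imports Defs begin

text \<open>Two adjacent vertices differ by a vector a (e_c - e_k). If all edges at one vertex of a
  clique change the same pair of coordinates {j, k}, then all its edges do, and the value of
  coordinate j separates the at most n + 1 vertices. Otherwise the clique contains a triangle
  x, y, z whose edges change the pairs {c, k}, {c, q}, {k, q}; it is then a star
  w + a e_i or w - a e_i (i = c, k, q) centred at w = x(c := y c). A further vertex v adjacent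
  to all three points of the star has v - w of coordinate sum a (resp. -a) and differing in two
  coordinates from each of a e_c, a e_k, a e_q; this forces v - w to be a e_l itself, so the
  whole clique lies on the star.\<close>

lemma mem_diff_coords: "i \<in> diff_coords m x y \<longleftrightarrow> i < m \<and> x i \<noteq> y i"
  unfolding diff_coords_def by auto

lemma finite_diff_coords [simp]: "finite (diff_coords m x y)"
  unfolding diff_coords_def by auto

lemma diff_coords_commute: "diff_coords m x y = diff_coords m y x"
  unfolding diff_coords_def by auto

lemma eq_if_notin_diff_coords:
  assumes "in_Nm m x" "in_Nm m y" "i \<notin> diff_coords m x y"
  shows "x i = y i"
  using assms unfolding in_Nm_def diff_coords_def by (cases "i < m") auto

lemma sym_diff_diff_coords_subset:
  "sym_diff (diff_coords m x y) (diff_coords m x z) \<subseteq> diff_coords m y z"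
  unfolding diff_coords_def by auto

lemma diff_coords_subset_Un: "diff_coords m y z \<subseteq> diff_coords m x y \<union> diff_coords m x z"
  unfolding diff_coords_def by auto

lemma in_Nm_fun_upd: "in_Nm m x \<Longrightarrow> c < m \<Longrightarrow> in_Nm m (x(c := t))"
  unfolding in_Nm_def by auto

lemma card_two_sets_share_one:
  assumes A: "card A = 2" and B: "card B = 2" and "A \<noteq> B" and sd: "card (sym_diff A B) \<le> 2"
  shows "\<exists>c k q. c \<noteq> k \<and> c \<noteq> q \<and> k \<noteq> q \<and> A = {c, k} \<and> B = {c, q}"
proof -
  have fin: "finite A" "finite B" using A B card.infinite by fastforce+
  have "A \<inter> B \<noteq> {}"
  proof
    assume "A \<inter> B = {}"
    then have "sym_diff A B = A \<union> B" by blast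
    then show False using sd card_Un_disjoint[OF fin \<open>A \<inter> B = {}\<close>] A B by simp
  qed
  then obtain c where c: "c \<in> A" "c \<in> B" by blast
  obtain k where k: "A - {c} = {k}"
    using A c card_1_singletonE by (metis One_nat_def Suc_1 diff_Suc_1 card_Diff_singleton)
  obtain q where q: "B - {c} = {q}"
    using B c card_1_singletonE by (metis One_nat_def Suc_1 diff_Suc_1 card_Diff_singleton)
  have AB: "A = {c, k}" "B = {c, q}" using c k q by blast+
  moreover have "c \<noteq> k" "c \<noteq> q" using k q by blast+
  moreover have "k \<noteq> q" using AB \<open>A \<noteq> B\<close> by auto
  ultimately show ?thesis by (intro exI[of _ c] exI[of _ k] exI[of _ q]) simp
qed

lemma diff_coords_triangle:
  assumes xy: "card (diff_coords m x y) = 2" and xz: "card (diff_coords m x z) = 2"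
    and yz: "card (diff_coords m y z) = 2" and ne: "diff_coords m x y \<noteq> diff_coords m x z"
  shows "\<exists>c k q. c \<noteq> k \<and> c \<noteq> q \<and> k \<noteq> q \<and> diff_coords m x y = {c, k} \<and>
           diff_coords m x z = {c, q} \<and> diff_coords m y z = {k, q}"
proof -
  have sd: "card (sym_diff (diff_coords m x y) (diff_coords m x z)) \<le> 2"
    using card_mono[OF finite_diff_coords sym_diff_diff_coords_subset[of m x y z]] yz by simp
  obtain c k q where ckq: "c \<noteq> k" "c \<noteq> q" "k \<noteq> q"
    and Dxy: "diff_coords m x y = {c, k}" and Dxz: "diff_coords m x z = {c, q}"
    using card_two_sets_share_one[OF xy xz ne sd] by blast
  have "{k, q} \<subseteq> diff_coords m y z"
    using sym_diff_diff_coords_subset[of m x y z] ckq unfolding Dxy Dxz by auto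
  then have "diff_coords m y z = {k, q}"
    using card_subset_eq[OF finite_diff_coords, of "{k, q}" m y z] yz ckq by simp
  with ckq Dxy Dxz show ?thesis by blast
qed

lemma coord_sum_pair_eq:
  assumes x: "x \<in> SR_verts m n" and y: "y \<in> SR_verts m n"
    and D: "diff_coords m x y = {c, k}" and "c \<noteq> k"
  shows "x c + x k = y c + y k"
proof -
  have ck: "{c, k} \<subseteq> {..<m}" using D by (auto simp: mem_diff_coords dest: equalityD2)
  have agree: "x i = y i" if "i \<in> {..<m} - {c, k}" for i
    using that by (auto simp: mem_diff_coords D[symmetric])
  have "coord_sum m x = (\<Sum>i\<in>{..<m} - {c, k}. x i) + (x c + x k)"
    unfolding coord_sum_def using sum.subset_diff[OF ck] \<open>c \<noteq> k\<close> by simp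
  moreover have "coord_sum m y = (\<Sum>i\<in>{..<m} - {c, k}. x i) + (y c + y k)"
    unfolding coord_sum_def using sum.subset_diff[OF ck] \<open>c \<noteq> k\<close> agree by simp
  moreover have "coord_sum m x = coord_sum m y" using x y unfolding SR_verts_def by simp
  ultimately show ?thesis by simp
qed

lemma coord_sum_vplus_unit:
  "i < m \<Longrightarrow> coord_sum m (vplus w a (unit_vec i)) = coord_sum m w + a"
  unfolding coord_sum_def vplus_def unit_vec_def
  by (simp add: sum.distrib if_distrib[of "\<lambda>t. a * t"] cong: if_cong)

lemma coord_sum_vminus_unit:
  assumes "i < m" "a \<le> w i"
  shows "coord_sum m w = coord_sum m (vminus w a (unit_vec i)) + a"
proof -
  have "vplus (vminus w a (unit_vec i)) a (unit_vec i) = w"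
    using assms by (auto simp: vplus_def vminus_def unit_vec_def)
  then show ?thesis using coord_sum_vplus_unit[OF assms(1), of "vminus w a (unit_vec i)" a] by simp
qed

lemma SR_adjacent_vplus:
  assumes x: "x \<in> SR_verts m n" and y: "y \<in> SR_verts m n"
    and D: "diff_coords m x y = {c, k}" and "c \<noteq> k" and lt: "y c < x c"
  shows "x = vplus (x(c := y c)) (x c - y c) (unit_vec c)"
    and "y = vplus (x(c := y c)) (x c - y c) (unit_vec k)"
proof -
  have agree: "x i = y i" if "i \<noteq> c" "i \<noteq> k" for i
    using eq_if_notin_diff_coords[of m x y i] x y that D unfolding SR_verts_def by auto
  have "x c + x k = y c + y k" using coord_sum_pair_eq[OF x y D \<open>c \<noteq> k\<close>] .
  then show "x = vplus (x(c := y c)) (x c - y c) (unit_vec c)"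
    and "y = vplus (x(c := y c)) (x c - y c) (unit_vec k)"
    using agree lt \<open>c \<noteq> k\<close> by (auto simp: fun_eq_iff vplus_def unit_vec_def)
qed

lemma SR_adjacent_vminus:
  assumes x: "x \<in> SR_verts m n" and y: "y \<in> SR_verts m n"
    and D: "diff_coords m x y = {c, k}" and "c \<noteq> k" and lt: "x c < y c"
  shows "x = vminus (x(c := y c)) (y c - x c) (unit_vec c)"
    and "y = vminus (x(c := y c)) (y c - x c) (unit_vec k)"
    and "y c - x c \<le> x k"
proof -
  have agree: "x i = y i" if "i \<noteq> c" "i \<noteq> k" for i
    using eq_if_notin_diff_coords[of m x y i] x y that D unfolding SR_verts_def by auto
  have "x c + x k = y c + y k" using coord_sum_pair_eq[OF x y D \<open>c \<noteq> k\<close>] .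
  then show "x = vminus (x(c := y c)) (y c - x c) (unit_vec c)"
    and "y = vminus (x(c := y c)) (y c - x c) (unit_vec k)"
    and "y c - x c \<le> x k"
    using agree lt \<open>c \<noteq> k\<close> by (auto simp: fun_eq_iff vminus_def unit_vec_def)
qed

lemma SR_triangle_vplus_star:
  assumes x: "x \<in> SR_verts m n" and y: "y \<in> SR_verts m n" and z: "z \<in> SR_verts m n"
    and Dxy: "diff_coords m x y = {c, k}" and Dxz: "diff_coords m x z = {c, q}"
    and ckq: "c \<noteq> k" "c \<noteq> q" "k \<noteq> q" and "y c = z c" and lt: "y c < x c"
  shows "\<exists>w a T. T \<subseteq> {..<m} \<and> card T = 3 \<and> 1 \<le> a \<and> in_Nm m w \<and> coord_sum m w + a = n \<and>
           {x, y, z} = (\<lambda>i. vplus w a (unit_vec i)) ` T"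
proof -
  have "c < m" "k < m" "q < m" using Dxy Dxz by (auto simp: mem_diff_coords dest: equalityD2)
  define w a where "w = x(c := y c)" and "a = x c - y c"
  have x_eq: "x = vplus w a (unit_vec c)" and "y = vplus w a (unit_vec k)"
    unfolding w_def a_def by (fact SR_adjacent_vplus[OF x y Dxy ckq(1) lt])+
  moreover have "z = vplus w a (unit_vec q)"
    using lt unfolding w_def a_def \<open>y c = z c\<close> by (intro SR_adjacent_vplus(2)[OF x z Dxz ckq(2)])
  moreover have "coord_sum m w + a = n"
    using coord_sum_vplus_unit[OF \<open>c < m\<close>, of w a] x_eq x unfolding SR_verts_def by simp
  moreover have "in_Nm m w" using x \<open>c < m\<close> unfolding w_def SR_verts_def by (simp add: in_Nm_fun_upd)
  moreover have "1 \<le> a" using lt unfolding a_def by simp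
  ultimately show ?thesis
    using ckq \<open>c < m\<close> \<open>k < m\<close> \<open>q < m\<close>
    by (intro exI[of _ w] exI[of _ a] exI[of _ "{c, k, q}"]) auto
qed

lemma SR_triangle_vminus_star:
  assumes x: "x \<in> SR_verts m n" and y: "y \<in> SR_verts m n" and z: "z \<in> SR_verts m n"
    and Dxy: "diff_coords m x y = {c, k}" and Dxz: "diff_coords m x z = {c, q}"
    and ckq: "c \<noteq> k" "c \<noteq> q" "k \<noteq> q" and "y c = z c" and lt: "x c < y c"
  shows "\<exists>w a T. T \<subseteq> {..<m} \<and> card T = 3 \<and> 1 \<le> a \<and> in_Nm m w \<and> coord_sum m w = n + a \<and>
           (\<forall>i\<in>T. a \<le> w i) \<and> {x, y, z} = (\<lambda>i. vminus w a (unit_vec i)) ` T"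
proof -
  have "c < m" "k < m" "q < m" using Dxy Dxz by (auto simp: mem_diff_coords dest: equalityD2)
  define w a where "w = x(c := y c)" and "a = y c - x c"
  have x_eq: "x = vminus w a (unit_vec c)" and "y = vminus w a (unit_vec k)"
    unfolding w_def a_def by (fact SR_adjacent_vminus[OF x y Dxy ckq(1) lt])+
  moreover have "z = vminus w a (unit_vec q)"
    using lt unfolding w_def a_def \<open>y c = z c\<close> by (intro SR_adjacent_vminus(2)[OF x z Dxz ckq(2)])
  moreover have le: "\<forall>i\<in>{c, k, q}. a \<le> w i"
  proof -
    have "a \<le> x k" unfolding a_def by (fact SR_adjacent_vminus(3)[OF x y Dxy ckq(1) lt])
    moreover have "a \<le> x q"
      using lt unfolding a_def \<open>y c = z c\<close> by (intro SR_adjacent_vminus(3)[OF x z Dxz ckq(2)])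
    ultimately show ?thesis using ckq unfolding w_def a_def by auto
  qed
  moreover have "coord_sum m w = n + a"
    using coord_sum_vminus_unit[OF \<open>c < m\<close>, of a w] le x_eq x unfolding SR_verts_def by simp
  moreover have "in_Nm m w" using x \<open>c < m\<close> unfolding w_def SR_verts_def by (simp add: in_Nm_fun_upd)
  moreover have "1 \<le> a" using lt unfolding a_def by simp
  ultimately show ?thesis
    using ckq \<open>c < m\<close> \<open>k < m\<close> \<open>q < m\<close>
    by (intro exI[of _ w] exI[of _ a] exI[of _ "{c, k, q}"]) auto
qed

lemma SR_triangle_star:
  assumes x: "x \<in> SR_verts m n" and y: "y \<in> SR_verts m n" and z: "z \<in> SR_verts m n"
    and xy: "card (diff_coords m x y) = 2" and xz: "card (diff_coords m x z) = 2"
    and yz: "card (diff_coords m y z) = 2" and ne: "diff_coords m x y \<noteq> diff_coords m x z"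
  shows "(\<exists>w a T. T \<subseteq> {..<m} \<and> card T = 3 \<and> 1 \<le> a \<and> in_Nm m w \<and> coord_sum m w + a = n \<and>
            {x, y, z} = (\<lambda>i. vplus w a (unit_vec i)) ` T)
       \<or> (\<exists>w a T. T \<subseteq> {..<m} \<and> card T = 3 \<and> 1 \<le> a \<and> in_Nm m w \<and> coord_sum m w = n + a \<and>
            (\<forall>i\<in>T. a \<le> w i) \<and> {x, y, z} = (\<lambda>i. vminus w a (unit_vec i)) ` T)"
proof -
  obtain c k q where ckq: "c \<noteq> k" "c \<noteq> q" "k \<noteq> q" and Dxy: "diff_coords m x y = {c, k}"
    and Dxz: "diff_coords m x z = {c, q}" and Dyz: "diff_coords m y z = {k, q}"
    using diff_coords_triangle[OF xy xz yz ne] by blast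
  have "y c = z c"
    using eq_if_notin_diff_coords[of m y z c] y z Dyz ckq unfolding SR_verts_def by auto
  have "x c \<noteq> y c" using Dxy by (auto simp: mem_diff_coords dest: equalityD2)
  then consider "y c < x c" | "x c < y c" by linarith
  then show ?thesis
  proof cases
    case 1
    then show ?thesis
      by (intro disjI1 SR_triangle_vplus_star[OF x y z Dxy Dxz ckq \<open>y c = z c\<close>])
  next
    case 2
    then show ?thesis
      by (intro disjI2 SR_triangle_vminus_star[OF x y z Dxy Dxz ckq \<open>y c = z c\<close>])
  qed
qed

lemma card_diff_scaled_unit:
  fixes u :: "nat \<Rightarrow> 'a::zero"
  assumes "t < m" "a \<noteq> 0"
  defines "S \<equiv> {i. i < m \<and> u i \<noteq> 0}"
  shows "card {i. i < m \<and> u i \<noteq> (if i = t then a else 0)} =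
    (if u t = 0 then card S + 1 else if u t = a then card S - 1 else card S)"
proof -
  have "{i. i < m \<and> u i \<noteq> (if i = t then a else 0)} =
      (if u t = 0 then insert t S else if u t = a then S - {t} else S)"
    using assms unfolding S_def by auto
  moreover have "finite S" unfolding S_def by auto
  ultimately show ?thesis using assms unfolding S_def by (simp add: card_Diff_singleton)
qed

lemma eq_scaled_unit_if_near_three:
  fixes u :: "nat \<Rightarrow> int"
  assumes out: "\<forall>i\<ge>m. u i = 0" and sum: "(\<Sum>i<m. u i) = a" and "a > 0"
    and T: "T \<subseteq> {..<m}" "card T = 3"
    and near: "\<forall>t\<in>T. card {i. i < m \<and> u i \<noteq> (if i = t then a else 0)} = 2"
  shows "\<exists>l<m. \<forall>i. u i = (if i = l then a else 0)"
proof -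
  define S where "S = {i. i < m \<and> u i \<noteq> 0}"
  have fS: "finite S" unfolding S_def by auto
  have "(\<Sum>i<m. u i) = (\<Sum>i\<in>S. u i)"
    by (rule sum.mono_neutral_right) (auto simp: S_def)
  with sum have sum_S: "(\<Sum>i\<in>S. u i) = a" by simp
  have near_T: "(if u t = 0 then card S + 1 else if u t = a then card S - 1 else card S) = 2"
    if "t \<in> T" for t
    using card_diff_scaled_unit[of t m a u] near that T(1) \<open>a > 0\<close> unfolding S_def by auto
  show ?thesis
  proof (cases "\<exists>t\<in>T. u t = 0")
    case True
    then have "card S = 1" using near_T by fastforce
    then obtain l where S: "S = {l}" using card_1_singletonE by blast
    then have "l < m" "u l = a" using sum_S unfolding S_def by auto
    moreover have "u i = 0" if "i \<noteq> l" for i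
      using that out S unfolding S_def by (cases "i < m") auto
    ultimately show ?thesis by (intro exI[of _ l]) auto
  next
    case False
    then have TS: "T \<subseteq> S" using T(1) unfolding S_def by auto
    then have "card S \<ge> 3" using card_mono[OF fS] T(2) by metis
    then have u_T: "u t = a" "card S = 3" if "t \<in> T" for t
      using near_T[OF that] False that by (auto split: if_splits)
    obtain t where "t \<in> T" using T(2) by fastforce
    then have "S = T" using card_subset_eq[OF fS TS] T(2) u_T(2)[OF \<open>t \<in> T\<close>] by simp
    then have "a = 3 * a" using sum_S u_T(1) T(2) by simp
    then show ?thesis using \<open>a > 0\<close> by simp
  qed
qed

lemma vertex_in_vplus_star_if_near:
  assumes T: "T \<subseteq> {..<m}" "card T = 3" and "1 \<le> a"
    and w: "in_Nm m w" "coord_sum m w + a = n" and v: "v \<in> SR_verts m n"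
    and near: "\<forall>t\<in>T. card (diff_coords m (vplus w a (unit_vec t)) v) = 2"
  shows "v \<in> (\<lambda>i. vplus w a (unit_vec i)) ` {..<m}"
proof -
  define u where "u i = int (v i) - int (w i)" for i
  have "\<forall>i\<ge>m. u i = 0" using v w unfolding u_def SR_verts_def in_Nm_def by auto
  moreover have "(\<Sum>i<m. u i) = int a"
    using v w unfolding u_def SR_verts_def coord_sum_def by (simp add: sum_subtractf flip: of_nat_sum)
  moreover have "diff_coords m (vplus w a (unit_vec t)) v =
      {i. i < m \<and> u i \<noteq> (if i = t then int a else 0)}" for t
    unfolding diff_coords_def u_def vplus_def unit_vec_def by auto
  ultimately obtain l where "l < m" and u: "\<forall>i. u i = (if i = l then int a else 0)"
    using eq_scaled_unit_if_near_three[of m u "int a" T] T near \<open>1 \<le> a\<close> by auto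
  have "v i = vplus w a (unit_vec l) i" for i
    using u[rule_format, of i] unfolding u_def vplus_def unit_vec_def by (cases "i = l") simp_all
  then have "v = vplus w a (unit_vec l)" by (intro ext)
  with \<open>l < m\<close> show ?thesis by (intro rev_image_eqI[of l]) simp_all
qed

lemma vertex_in_vminus_star_if_near:
  assumes T: "T \<subseteq> {..<m}" "card T = 3" and "1 \<le> a" and le: "\<forall>t\<in>T. a \<le> w t"
    and w: "in_Nm m w" "coord_sum m w = n + a" and v: "v \<in> SR_verts m n"
    and near: "\<forall>t\<in>T. card (diff_coords m (vminus w a (unit_vec t)) v) = 2"
  shows "v \<in> (\<lambda>i. vminus w a (unit_vec i)) ` {i. i < m \<and> a \<le> w i}"
proof -
  define u where "u i = int (w i) - int (v i)" for i
  have "\<forall>i\<ge>m. u i = 0" using v w unfolding u_def SR_verts_def in_Nm_def by auto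
  moreover have "(\<Sum>i<m. u i) = int a"
    using v w unfolding u_def SR_verts_def coord_sum_def by (simp add: sum_subtractf flip: of_nat_sum)
  moreover have "diff_coords m (vminus w a (unit_vec t)) v =
      {i. i < m \<and> u i \<noteq> (if i = t then int a else 0)}" if "a \<le> w t" for t
    using that unfolding diff_coords_def u_def vminus_def unit_vec_def by auto
  ultimately obtain l where "l < m" and u: "\<forall>i. u i = (if i = l then int a else 0)"
    using eq_scaled_unit_if_near_three[of m u "int a" T] T near le \<open>1 \<le> a\<close> by auto
  have "a \<le> w l" using u[rule_format, of l] unfolding u_def by simp
  have "v i = vminus w a (unit_vec l) i" for i
    using u[rule_format, of i] unfolding u_def vminus_def unit_vec_def by (cases "i = l") simp_all
  then have "v = vminus w a (unit_vec l)" by (intro ext)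
  with \<open>l < m\<close> \<open>a \<le> w l\<close> show ?thesis by (intro rev_image_eqI[of l]) simp_all
qed

lemma subset_image_lessThanE:
  assumes C: "C \<subseteq> f ` J" and J: "J \<subseteq> {..<m}"
  obtains I where "I \<subseteq> J" "C = f ` I" "card C \<le> m"
proof -
  define I where "I = {i \<in> J. f i \<in> C}"
  have "I \<subseteq> J" "C = f ` I" using C unfolding I_def by blast+
  have "I \<subseteq> {..<m}" using J \<open>I \<subseteq> J\<close> by blast
  have "card C \<le> card I"
    using \<open>C = f ` I\<close> card_image_le finite_subset[OF \<open>I \<subseteq> {..<m}\<close>] by blast
  also have "card I \<le> m"
    using card_mono[OF finite_lessThan \<open>I \<subseteq> {..<m}\<close>] by simp
  finally show ?thesis using that \<open>I \<subseteq> J\<close> \<open>C = f ` I\<close> by blast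
qed

lemma SR_clique_verts: "SR_clique m n C \<Longrightarrow> x \<in> C \<Longrightarrow> x \<in> SR_verts m n"
  unfolding SR_clique_def by blast

lemma SR_clique_card_diff_coords:
  "SR_clique m n C \<Longrightarrow> x \<in> C \<Longrightarrow> y \<in> C \<Longrightarrow> x \<noteq> y \<Longrightarrow> card (diff_coords m x y) = 2"
  unfolding SR_clique_def SR_adj_def by blast

lemma SR_clique_subset_image:
  assumes C: "SR_clique m n C" and "f ` T \<subseteq> C" "T \<subseteq> J"
    and near: "\<And>v. v \<in> SR_verts m n \<Longrightarrow> \<forall>t\<in>T. card (diff_coords m (f t) v) = 2 \<Longrightarrow> v \<in> f ` J"
  shows "C \<subseteq> f ` J"
proof
  fix v assume "v \<in> C"
  show "v \<in> f ` J"
  proof (cases "v \<in> f ` T")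
    case True
    then show ?thesis using \<open>T \<subseteq> J\<close> by blast
  next
    case False
    have "card (diff_coords m (f t) v) = 2" if "t \<in> T" for t
      using SR_clique_card_diff_coords[OF C _ \<open>v \<in> C\<close>, of "f t"] \<open>f ` T \<subseteq> C\<close> False that
      by blast
    then show ?thesis using near SR_clique_verts[OF C \<open>v \<in> C\<close>] by blast
  qed
qed

lemma SR_clique_vplus_star:
  assumes C: "SR_clique m n C" and T: "T \<subseteq> {..<m}" "card T = 3" and "1 \<le> a"
    and w: "in_Nm m w" "coord_sum m w + a = n"
    and TC: "(\<lambda>i. vplus w a (unit_vec i)) ` T \<subseteq> C"
  shows "\<exists>a x I. 1 \<le> a \<and> a \<le> n \<and> in_Nm m x \<and> coord_sum m x = n - a \<and>
           I \<subseteq> {..<m} \<and> C = (\<lambda>i. vplus x a (unit_vec i)) ` I \<and> card C \<le> m"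
proof -
  have "C \<subseteq> (\<lambda>i. vplus w a (unit_vec i)) ` {..<m}"
    by (rule SR_clique_subset_image[OF C TC T(1) vertex_in_vplus_star_if_near[OF T \<open>1 \<le> a\<close> w]])
  then obtain I where "I \<subseteq> {..<m}" "C = (\<lambda>i. vplus w a (unit_vec i)) ` I" "card C \<le> m"
    by (rule subset_image_lessThanE[OF _ order_refl])
  then show ?thesis using \<open>1 \<le> a\<close> w by (intro exI[of _ a] exI[of _ w] exI[of _ I]) auto
qed

lemma SR_clique_vminus_star:
  assumes C: "SR_clique m n C" and T: "T \<subseteq> {..<m}" "card T = 3" and "1 \<le> a"
    and le: "\<forall>t\<in>T. a \<le> w t" and w: "in_Nm m w" "coord_sum m w = n + a"
    and TC: "(\<lambda>i. vminus w a (unit_vec i)) ` T \<subseteq> C"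
  shows "\<exists>a x I. 1 \<le> a \<and> in_Nm m x \<and> coord_sum m x = n + a \<and> I \<subseteq> {..<m} \<and>
           (\<forall>i\<in>I. x i \<ge> a) \<and> C = (\<lambda>i. vminus x a (unit_vec i)) ` I \<and> card C \<le> m"
proof -
  have "T \<subseteq> {i. i < m \<and> a \<le> w i}" using T(1) le by auto
  then have "C \<subseteq> (\<lambda>i. vminus w a (unit_vec i)) ` {i. i < m \<and> a \<le> w i}"
    by (rule SR_clique_subset_image[OF C TC _ vertex_in_vminus_star_if_near[OF T \<open>1 \<le> a\<close> le w]])
  moreover have "{i. i < m \<and> a \<le> w i} \<subseteq> {..<m}" by auto
  ultimately obtain I where "I \<subseteq> {i. i < m \<and> a \<le> w i}"
      "C = (\<lambda>i. vminus w a (unit_vec i)) ` I" "card C \<le> m"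
    by (rule subset_image_lessThanE)
  then show ?thesis using \<open>1 \<le> a\<close> w by (intro exI[of _ a] exI[of _ w] exI[of _ I]) auto
qed

lemma SR_clique_star_if_triangle:
  assumes C: "SR_clique m n C" and xyz: "x \<in> C" "y \<in> C" "z \<in> C" "x \<noteq> y" "x \<noteq> z"
    and ne: "diff_coords m x y \<noteq> diff_coords m x z"
  shows "(\<exists>a x I. 1 \<le> a \<and> a \<le> n \<and> in_Nm m x \<and> coord_sum m x = n - a \<and>
            I \<subseteq> {..<m} \<and> C = (\<lambda>i. vplus x a (unit_vec i)) ` I \<and> card C \<le> m)
       \<or> (\<exists>a x I. 1 \<le> a \<and> in_Nm m x \<and> coord_sum m x = n + a \<and>
            I \<subseteq> {..<m} \<and> (\<forall>i\<in>I. x i \<ge> a) \<and>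
            C = (\<lambda>i. vminus x a (unit_vec i)) ` I \<and> card C \<le> m)"
proof -
  have "y \<noteq> z" using ne by blast
  note triangle = SR_triangle_star[OF SR_clique_verts[OF C xyz(1)] SR_clique_verts[OF C xyz(2)]
      SR_clique_verts[OF C xyz(3)] SR_clique_card_diff_coords[OF C xyz(1,2,4)]
      SR_clique_card_diff_coords[OF C xyz(1,3,5)]
      SR_clique_card_diff_coords[OF C xyz(2,3) \<open>y \<noteq> z\<close>] ne]
  from triangle show ?thesis
  proof (elim disjE exE conjE)
    fix w a T
    assume T: "T \<subseteq> {..<m}" "card T = 3" and a: "1 \<le> a" and w: "in_Nm m w" "coord_sum m w + a = n"
      and star: "{x, y, z} = (\<lambda>i. vplus w a (unit_vec i)) ` T"
    have "(\<lambda>i. vplus w a (unit_vec i)) ` T \<subseteq> C" unfolding star[symmetric] using xyz by simp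
    then show ?thesis by (intro disjI1 SR_clique_vplus_star[OF C T a w])
  next
    fix w a T
    assume T: "T \<subseteq> {..<m}" "card T = 3" and a: "1 \<le> a" and w: "in_Nm m w" "coord_sum m w = n + a"
      and le: "\<forall>i\<in>T. a \<le> w i" and star: "{x, y, z} = (\<lambda>i. vminus w a (unit_vec i)) ` T"
    have "(\<lambda>i. vminus w a (unit_vec i)) ` T \<subseteq> C" unfolding star[symmetric] using xyz by simp
    then show ?thesis by (intro disjI2 SR_clique_vminus_star[OF C T a le w])
  qed
qed

lemma SR_clique_diff_coords_eq_if_common_at:
  assumes C: "SR_clique m n C" and "x0 \<in> C" and P: "\<forall>y\<in>C. y \<noteq> x0 \<longrightarrow> diff_coords m x0 y = P"
  shows "\<forall>x\<in>C. \<forall>y\<in>C. x \<noteq> y \<longrightarrow> diff_coords m x y = P"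
proof (intro ballI impI)
  fix x y assume xy: "x \<in> C" "y \<in> C" "x \<noteq> y"
  consider "x = x0" | "y = x0" | "x \<noteq> x0" "y \<noteq> x0" by blast
  then show "diff_coords m x y = P"
  proof cases
    case 1
    then show ?thesis using P xy by simp
  next
    case 2
    then show ?thesis using P xy diff_coords_commute[of m x y] by simp
  next
    case 3
    then have Px: "diff_coords m x0 x = P" and "diff_coords m x0 y = P" using P xy by simp_all
    then have "diff_coords m x y \<subseteq> P" using diff_coords_subset_Un[of m x y x0] by simp
    moreover have "card (diff_coords m x y) = card P"
      using SR_clique_card_diff_coords[OF C xy] SR_clique_card_diff_coords[OF C \<open>x0 \<in> C\<close> xy(1)]
        3 Px by simp
    moreover have "finite P" unfolding Px[symmetric] by simp
    ultimately show ?thesis using card_subset_eq by blast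
  qed
qed

lemma card_le_if_inj_on_coord:
  assumes "C \<subseteq> SR_verts m n" "j < m" "inj_on (\<lambda>v. v j) C"
  shows "card C \<le> n + 1"
proof -
  have "(\<lambda>v. v j) ` C \<subseteq> {..n}"
  proof
    fix t assume "t \<in> (\<lambda>v. v j) ` C"
    then obtain v where "v \<in> C" "t = v j" by blast
    moreover have "v j \<le> (\<Sum>i<m. v i)" using \<open>j < m\<close> by (intro member_le_sum) auto
    ultimately show "t \<in> {..n}" using assms(1) unfolding SR_verts_def coord_sum_def by auto
  qed
  then have "card ((\<lambda>v. v j) ` C) \<le> n + 1" using card_mono[OF finite_atMost] by fastforce
  then show ?thesis using card_image[OF assms(3)] by simp
qed

lemma SR_clique_common_pair:
  assumes C: "SR_clique m n C"
    and common: "\<forall>x\<in>C. \<forall>y\<in>C. \<forall>z\<in>C. x \<noteq> y \<longrightarrow> x \<noteq> z \<longrightarrow> diff_coords m x y = diff_coords m x z"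
  shows "\<exists>j k. j \<noteq> k \<and> (\<forall>x\<in>C. \<forall>y\<in>C. x \<noteq> y \<longrightarrow> diff_coords m x y = {j, k}) \<and> card C \<le> n + 1"
proof (cases "\<exists>x\<in>C. \<exists>y\<in>C. x \<noteq> y")
  case True
  then obtain x0 y0 where xy0: "x0 \<in> C" "y0 \<in> C" "x0 \<noteq> y0" by blast
  then obtain j k where jk: "diff_coords m x0 y0 = {j, k}" "j \<noteq> k"
    using SR_clique_card_diff_coords[OF C] card_2_iff by metis
  have pairs: "\<forall>x\<in>C. \<forall>y\<in>C. x \<noteq> y \<longrightarrow> diff_coords m x y = {j, k}"
    using SR_clique_diff_coords_eq_if_common_at[OF C \<open>x0 \<in> C\<close>] common xy0 jk by metis
  have "j < m" using jk by (auto simp: mem_diff_coords dest: equalityD2)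
  moreover have "inj_on (\<lambda>v. v j) C"
  proof (rule inj_onI)
    fix x y assume "x \<in> C" "y \<in> C" "x j = y j"
    show "x = y"
    proof (rule ccontr)
      assume "x \<noteq> y"
      then have "j \<in> diff_coords m x y" using pairs \<open>x \<in> C\<close> \<open>y \<in> C\<close> by simp
      with \<open>x j = y j\<close> show False by (simp add: mem_diff_coords)
    qed
  qed
  moreover have "C \<subseteq> SR_verts m n" using C unfolding SR_clique_def by blast
  ultimately have "card C \<le> n + 1" using card_le_if_inj_on_coord by blast
  with pairs jk show ?thesis by (intro exI[of _ j] exI[of _ k]) simp
next
  case False
  then have "C = {} \<or> (\<exists>x. C = {x})" by blast
  then show ?thesis by (intro exI[of _ 0] exI[of _ 1]) auto
qed

theorem lemma9:
  fixes m n :: nat and C :: "(nat \<Rightarrow> nat) set"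
  assumes "SR_clique m n C"
  shows "(\<exists>j k. j \<noteq> k \<and>
            (\<forall>x\<in>C. \<forall>y\<in>C. x \<noteq> y \<longrightarrow> diff_coords m x y = {j, k}) \<and>
            card C \<le> n + 1)
       \<or> (\<exists>(a::nat) x I. 1 \<le> a \<and> a \<le> n \<and> in_Nm m x \<and> coord_sum m x = n - a \<and>
            I \<subseteq> {..<m} \<and> C = (\<lambda>i. vplus x a (unit_vec i)) ` I \<and> card C \<le> m)
       \<or> (\<exists>(a::nat) x I. 1 \<le> a \<and> in_Nm m x \<and> coord_sum m x = n + a \<and>
            I \<subseteq> {..<m} \<and> (\<forall>i\<in>I. x i \<ge> a) \<and>
            C = (\<lambda>i. vminus x a (unit_vec i)) ` I \<and> card C \<le> m)"
proof (cases "\<forall>x\<in>C. \<forall>y\<in>C. \<forall>z\<in>C. x \<noteq> y \<longrightarrow> x \<noteq> z \<longrightarrow> diff_coords m x y = diff_coords m x z")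
  case True
  from SR_clique_common_pair[OF assms this] show ?thesis by (rule disjI1)
next
  case False
  then obtain x y z where "x \<in> C" "y \<in> C" "z \<in> C" "x \<noteq> y" "x \<noteq> z"
    and "diff_coords m x y \<noteq> diff_coords m x z" by blast
  from SR_clique_star_if_triangle[OF assms this] show ?thesis by (rule disjI2)
qed

end
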